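(* For all $0<x,y\le1$, $$\frac{|K_2(x,y)|}{x}\le\frac1{12}+\frac{x}{(36\sqrt3)\,y}+\frac1{2y^2}\Big|\sum_{m>1/y}\frac{\widetilde B_2\left(\frac{my}{x}\right)}{m^2}\Big|$$ (the sum over integers $m>1/y$), $$|K_2(x,y)|\le\Big(\frac14+\frac1{36\sqrt3}\Big)\frac{\min\{x,y\}}{\max\{x,y\}},$$ and $$\Big|K_2(x,x)-\frac1{12}\Big|\le\Big(\frac16+\frac1{36\sqrt3}\Big)x.$$
   Context: Let $K:[0,1]\times[0,1]\to\mathbb R$ be defined by $K(x,y)=\frac12-\{(xy)^{-1}\}$ if $0<x,y\le 1$, and $K(x,y)=0$ if $0\le x,y\le1$ and $xy=0$, where $\{\alpha\}=\alpha-\lfloor\alpha\rfloor$. Define $K_2(x,y)=\int_0^1K(x,z)K(z,y)\,dz$ for $0\le x,y\le1$. The periodic Bernoulli function is $\widetilde B_2(t)=\{t\}^2-\{t\}+\frac16$ for $t\in\mathbb R$. *)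

theory Defs
  imports "HOL-Analysis.Analysis"
begin

definition K :: "real \<Rightarrow> real \<Rightarrow> real" where
  "K x y = (if x * y = 0 then 0 else 1/2 - frac (1 / (x * y)))"

definition K2 :: "real \<Rightarrow> real \<Rightarrow> real" where
  "K2 x y = integral {0..1} (\<lambda>z. K x z * K z y)"

definition B2t :: "real \<Rightarrow> real" where
  "B2t t = (frac t)^2 - frac t + 1/6"

end

theory Submission
  imports Defs
begin

(* Since d/dz B2t (1/(xz)) = -2 B1t (1/(xz)) / (x z^2), the factor K x z = - B1t (1/(xz)) of the integrand
   is x z^2/2 times the derivative of B2t (1/(xz)). Integrating by parts on the intervals
   [1/((n+1)y), 1/(ny)], between the jumps of z^2 * B1t (1/(zy)), writes K2 x y as a boundary term at z = 1,
   plus the contributions x/(2y^2) * B2t (ny/x) / n^2 of the jumps at z = 1/(ny) for n > 1/y,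
   plus a remainder integral. A second integration by parts, with B3t and |B3t| <= sqrt 3/36, gives
   |int_0^1 B2t (1/(xz)) dz| <= x/(18 sqrt 3), which bounds the remainder by x/24 + x^2/(36 sqrt 3 y).
   The three estimates then follow from |B2t| <= 1/6, B2t n = 1/6 for integers n and
   1/M <= sum_{n >= M} 1/n^2 <= 1/M + 1/M^2. *)

section \<open>Periodic Bernoulli functions\<close>

definition B1t :: "real \<Rightarrow> real" where
  "B1t t = frac t - 1/2"

definition B3t :: "real \<Rightarrow> real" where
  "B3t t = frac t ^ 3 - 3/2 * frac t ^ 2 + 1/2 * frac t"

lemma abs_B1t_le: "\<bar>B1t t\<bar> \<le> 1/2"
  using frac_ge_0[of t] frac_lt_1[of t] unfolding B1t_def abs_le_iff by linarith

lemma abs_B2t_le: "\<bar>B2t t\<bar> \<le> 1/6"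
proof -
  have "0 \<le> frac t" "frac t < 1"
    by (simp_all add: frac_lt_1)
  then have "frac t ^ 2 \<le> frac t" "0 \<le> (frac t - 1/2)^2"
    by (simp_all add: power2_eq_square mult_left_le)
  then show ?thesis
    unfolding B2t_def abs_le_iff by (simp add: power2_eq_square algebra_simps)
qed

lemma B2t_of_nat [simp]: "B2t (real n) = 1/6"
  by (simp add: B2t_def frac_def)

lemma abs_B3t_le: "\<bar>B3t t\<bar> \<le> sqrt 3 / 36"
proof -
  define s a where "s = frac t - 1/2" and "a = sqrt 3 / 6"
  have s: "-1/2 \<le> s" "s \<le> 1/2"
    using frac_ge_0[of t] frac_lt_1[of t] unfolding s_def by linarith+
  have "3/2 \<le> sqrt 3"
    by (rule real_le_rsqrt) (simp add: power2_eq_square)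
  then have a: "a^2 = 1/12" "1/2 \<le> 2 * a"
    unfolding a_def by (simp_all add: power_divide)
  have B3t_s: "B3t t = s^3 - s/4"
    unfolding B3t_def s_def by (simp add: field_simps power3_eq_cube power2_eq_square)
  \<comment> \<open>the extrema of \<open>s^3 - s/4\<close> on \<open>[-1/2, 1/2]\<close> are at \<open>s = \<plusminus>a\<close>\<close>
  have "0 \<le> (s + a)^2 * (2*a - s)" "0 \<le> (s - a)^2 * (s + 2*a)"
    using s a by simp_all
  moreover have "(s + a)^2 * (2*a - s) = 3 * a^2 * s + 2 * a * a^2 - s^3"
    "(s - a)^2 * (s + 2*a) = s^3 - 3 * a^2 * s + 2 * a * a^2"
    by (simp_all add: algebra_simps power3_eq_cube power2_eq_square)
  ultimately show ?thesis
    unfolding B3t_s abs_le_iff a(1) by (simp add: a_def)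
qed

lemma isCont_comp_frac:
  fixes p :: "real \<Rightarrow> real"
  assumes p: "continuous_on UNIV p" and p01: "p 0 = p 1"
  shows "isCont (\<lambda>t. p (frac t)) t"
proof -
  \<comment> \<open>on \<open>[n, n + 1]\<close> the function agrees with \<open>p (t - n)\<close>, also at the right end since \<open>p 1 = p 0\<close>\<close>
  have unit_interval: "continuous_on {of_int n .. of_int n + 1} (\<lambda>t. p (frac t))" for n :: int
  proof (rule continuous_on_eq)
    show "continuous_on {of_int n .. of_int n + 1} (\<lambda>t. p (t - of_int n))"
      by (intro continuous_on_compose2[OF p]) (auto intro!: continuous_intros)
    fix t :: real assume t: "t \<in> {of_int n .. of_int n + 1}"
    show "p (t - of_int n) = p (frac t)"
    proof (cases "t = of_int n + 1")
      case True
      then show ?thesis using p01 by (simp add: frac_def)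
    next
      case False
      then have "\<lfloor>t\<rfloor> = n" using t by (intro floor_unique) auto
      then show ?thesis by (simp add: frac_def)
    qed
  qed
  define n where "n = \<lfloor>t\<rfloor>"
  have "{of_int (n - 1) .. of_int (n - 1) + 1} \<union> {of_int n .. of_int n + 1} = {real_of_int n - 1 .. of_int n + 1}"
    by auto
  then have "continuous_on {real_of_int n - 1 .. of_int n + 1} (\<lambda>t. p (frac t))"
    by (metis unit_interval continuous_on_closed_Un closed_atLeastAtMost)
  moreover have "t \<in> {real_of_int n - 1 <..< of_int n + 1}"
    using of_int_floor_le[of t] real_of_int_floor_add_one_gt[of t] unfolding n_def by simp linarith
  ultimately show ?thesis
    by (metis continuous_on_interior interior_atLeastAtMost_real)
qed

lemma continuous_on_B2t [continuous_intros]: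
  "continuous_on A f \<Longrightarrow> continuous_on A (\<lambda>t. B2t (f t))"
proof -
  have "continuous_on UNIV B2t"
    unfolding B2t_def by (intro continuous_at_imp_continuous_on ballI isCont_comp_frac)
      (auto intro!: continuous_intros)
  then show "continuous_on A f \<Longrightarrow> continuous_on A (\<lambda>t. B2t (f t))"
    using continuous_on_compose2 by blast
qed

lemma continuous_on_B3t [continuous_intros]:
  "continuous_on A f \<Longrightarrow> continuous_on A (\<lambda>t. B3t (f t))"
proof -
  have "continuous_on UNIV B3t"
    unfolding B3t_def by (intro continuous_at_imp_continuous_on ballI isCont_comp_frac)
      (auto intro!: continuous_intros)
  then show "continuous_on A f \<Longrightarrow> continuous_on A (\<lambda>t. B3t (f t))"
    using continuous_on_compose2 by blast
qed

lemma has_real_derivative_frac: "t \<notin> \<int> \<Longrightarrow> (frac has_real_derivative 1) (at t)"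
  unfolding frac_def[abs_def]
  by (auto intro!: derivative_eq_intros floor_has_real_derivative)

lemma B2t_has_real_derivative: "t \<notin> \<int> \<Longrightarrow> (B2t has_real_derivative 2 * B1t t) (at t)"
  unfolding B2t_def[abs_def] B1t_def
  by (auto intro!: derivative_eq_intros DERIV_chain2[OF has_real_derivative_frac])

lemma B3t_has_real_derivative: "t \<notin> \<int> \<Longrightarrow> (B3t has_real_derivative 3 * B2t t) (at t)"
  unfolding B3t_def[abs_def] B2t_def
  by (auto intro!: derivative_eq_intros DERIV_chain2[OF has_real_derivative_frac] simp: algebra_simps)

lemma has_real_derivative_comp_inverse_mult:
  assumes "x \<noteq> 0" "z \<noteq> 0" "(f has_real_derivative D) (at (1 / (x * z)))"
  shows "((\<lambda>z. f (1 / (x * z))) has_real_derivative - D / (x * z^2)) (at z)"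
proof -
  have "((\<lambda>z. 1 / (x * z)) has_real_derivative - 1 / (x * z^2)) (at z)"
    using assms(1,2) by (auto intro!: derivative_eq_intros simp: field_simps power2_eq_square)
  from DERIV_chain2[OF assms(3) this] show ?thesis by simp
qed

lemma finite_inverse_mult_in_Ints:
  fixes a b x :: real
  assumes "0 < a" "0 < x"
  shows "finite {z \<in> {a..b}. 1 / (x * z) \<in> \<int>}"
proof (rule finite_subset)
  show "{z \<in> {a..b}. 1 / (x * z) \<in> \<int>} \<subseteq> (\<lambda>k. 1 / (x * k)) ` {k \<in> \<int>. 1 / (x * b) \<le> k \<and> k \<le> 1 / (x * a)}"
  proof (intro subsetI image_eqI)
    fix z assume z: "z \<in> {z \<in> {a..b}. 1 / (x * z) \<in> \<int>}"
    then show "z = 1 / (x * (1 / (x * z)))" using assms by auto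
    show "1 / (x * z) \<in> {k \<in> \<int>. 1 / (x * b) \<le> k \<and> k \<le> 1 / (x * a)}"
      using z assms by (auto intro!: divide_left_mono mult_left_mono mult_pos_pos)
  qed
qed (rule finite_imageI[OF finite_int_segment])

lemma bounded_measurable_integrable_on:
  fixes f :: "real \<Rightarrow> real"
  assumes "f \<in> borel_measurable borel" "\<And>z. z \<in> {a..b} \<Longrightarrow> \<bar>f z\<bar> \<le> C"
  shows "f integrable_on {a..b}"
proof (rule measurable_bounded_by_integrable_imp_integrable_real)
  show "f \<in> borel_measurable (lebesgue_on {a..b})"
    using assms(1) by (simp add: measurable_completion measurable_restrict_space1)
qed (use assms(2) in auto)

lemma tendsto_integral_at_right:
  fixes f :: "real \<Rightarrow> 'a::banach"
  assumes "f integrable_on {a..b}" "a < b"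
  shows "((\<lambda>e. integral {e..b} f) \<longlongrightarrow> integral {a..b} f) (at_right a)"
  using continuous_on_Icc_at_rightD[OF indefinite_integral_continuous_1'[OF assms(1)] assms(2)] .

lemma filterlim_inverse_mult_at_right_0:
  fixes y :: real
  assumes "0 < y"
  shows "filterlim (\<lambda>N. 1 / (real N * y)) (at_right 0) at_top"
proof (rule tendsto_imp_filterlim_at_right)
  show "(\<lambda>N. 1 / (real N * y)) \<longlonglongrightarrow> 0"
    using tendsto_mult_left_zero[OF lim_inverse_n', of "1/y"] by simp
  show "\<forall>\<^sub>F N in sequentially. 0 < 1 / (real N * y)"
    using eventually_gt_at_top[of 0] by eventually_elim (use assms in simp)
qed

lemma filterlim_atLeastAtMost_at_top:
  "filterlim (\<lambda>N. {M..N}) (finite_subsets_at_top {M::nat..}) at_top"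
  unfolding filterlim_finite_subsets_at_top
proof (safe, goal_cases)
  case (1 X)
  then obtain n where n: "X \<subseteq> {..n}"
    by (auto simp: finite_nat_set_iff_bounded_le)
  show ?case
    using eventually_ge_at_top[of n] by eventually_elim (use n 1 in force)
qed

lemma tendsto_sum_atLeastAtMost_infsum:
  fixes f :: "nat \<Rightarrow> 'a::{topological_comm_monoid_add, t2_space}"
  assumes "f summable_on {M..}"
  shows "(\<lambda>N. \<Sum>m=M..N. f m) \<longlonglongrightarrow> infsum f {M..}"
  using filterlim_compose[OF has_sum_infsum[OF assms, unfolded has_sum_def] filterlim_atLeastAtMost_at_top] .

lemma obtain_least_nat_greater:
  fixes t :: real
  assumes "0 \<le> t"
  obtains M :: nat where "real M - 1 \<le> t" "t < real M" "{m. t < real m} = {M..}"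
proof
  define M where "M = nat \<lfloor>t\<rfloor> + 1"
  have M: "real M = of_int \<lfloor>t\<rfloor> + 1"
    using assms by (simp add: M_def)
  show "real M - 1 \<le> t" "t < real M"
    unfolding M by linarith+
  show "{m. t < real m} = {M..}"
    using M by (auto simp: floor_less_iff) linarith+
qed

lemma inverse_diff_inverse_succ_bounds:
  fixes t :: real
  assumes "0 < t"
  shows "1 / (1 + t)^2 \<le> 1 / t - 1 / (1 + t)" and "1 / t - 1 / (1 + t) \<le> 1 / t^2"
proof -
  have "1 / t - 1 / (1 + t) = 1 / (t * (1 + t))"
    using assms by (simp add: field_simps)
  moreover have "t * (1 + t) \<le> (1 + t)^2" "t^2 \<le> t * (1 + t)"
    using assms by (simp_all add: power2_eq_square algebra_simps)
  ultimately show "1 / (1 + t)^2 \<le> 1 / t - 1 / (1 + t)" "1 / t - 1 / (1 + t) \<le> 1 / t^2"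
    using assms by (simp_all add: frac_le)
qed

lemma sum_inverse_squares_bounds:
  assumes "1 \<le> M" "M \<le> N"
  shows "1 / real M - 1 / real (Suc N) \<le> (\<Sum>m=M..N. 1 / (real m)^2)"
    and "(\<Sum>m=M..N. 1 / (real m)^2) \<le> 1 / (real M)^2 + 1 / real M - 1 / real N"
  using assms(2)
proof (induction N rule: dec_induct)
  case base
  have "1 / real M - 1 / real (Suc M) \<le> 1 / (real M)^2"
    using inverse_diff_inverse_succ_bounds(2)[of "real M"] assms(1) by simp
  then show "1 / real M - 1 / real (Suc M) \<le> (\<Sum>m=M..M. 1 / (real m)^2)"
    by simp
  show "(\<Sum>m=M..M. 1 / (real m)^2) \<le> 1 / (real M)^2 + 1 / real M - 1 / real M"
    by simp
next
  case (step n)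
  have "0 < real n"
    using assms(1) step.hyps(1) by simp
  then have "1 / real (Suc n) - 1 / real (Suc (Suc n)) \<le> 1 / (real (Suc n))^2"
    "1 / (real (Suc n))^2 \<le> 1 / real n - 1 / real (Suc n)"
    using inverse_diff_inverse_succ_bounds(2)[of "real (Suc n)"] inverse_diff_inverse_succ_bounds(1)[of "real n"]
    by simp_all
  then show "1 / real M - 1 / real (Suc (Suc n)) \<le> (\<Sum>m=M..Suc n. 1 / (real m)^2)"
    and "(\<Sum>m=M..Suc n. 1 / (real m)^2) \<le> 1 / (real M)^2 + 1 / real M - 1 / real (Suc n)"
    using step.IH step.hyps(1) by simp_all
qed

lemma summable_on_inverse_squares: "(\<lambda>m::nat. 1 / (real m)^2) summable_on A"
proof (rule summable_on_subset_banach)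
  show "(\<lambda>m::nat. 1 / (real m)^2) summable_on UNIV"
    using inverse_power_summable[of 2, where 'a=real]
    by (subst summable_on_UNIV_nonneg_real_iff) (simp_all add: inverse_eq_divide)
qed simp

lemma infsum_inverse_squares_tail_bounds:
  assumes "1 \<le> M"
  shows "1 / real M \<le> (\<Sum>\<^sub>\<infinity>m\<in>{M..}. 1 / (real m)^2)"
    and "(\<Sum>\<^sub>\<infinity>m\<in>{M..}. 1 / (real m)^2) \<le> 1 / (real M)^2 + 1 / real M"
proof -
  have partial_sums: "(\<lambda>N. \<Sum>m=M..N. 1 / (real m)^2) \<longlonglongrightarrow> (\<Sum>\<^sub>\<infinity>m\<in>{M..}. 1 / (real m)^2)"
    by (rule tendsto_sum_atLeastAtMost_infsum[OF summable_on_inverse_squares])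
  have "(\<lambda>N. 1 / real M - 1 / real (Suc N)) \<longlonglongrightarrow> 1 / real M - 0"
    by (intro tendsto_intros LIMSEQ_Suc[OF lim_inverse_n'])
  moreover have "\<forall>\<^sub>F N in sequentially. 1 / real M - 1 / real (Suc N) \<le> (\<Sum>m=M..N. 1 / (real m)^2)"
    using eventually_ge_at_top[of M] by eventually_elim (rule sum_inverse_squares_bounds(1)[OF assms])
  ultimately show "1 / real M \<le> (\<Sum>\<^sub>\<infinity>m\<in>{M..}. 1 / (real m)^2)"
    using tendsto_le[OF trivial_limit_sequentially partial_sums] by simp
  have "(\<lambda>N. 1 / (real M)^2 + 1 / real M - 1 / real N) \<longlonglongrightarrow> 1 / (real M)^2 + 1 / real M - 0"
    by (intro tendsto_intros lim_inverse_n')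
  moreover have "\<forall>\<^sub>F N in sequentially. (\<Sum>m=M..N. 1 / (real m)^2) \<le> 1 / (real M)^2 + 1 / real M - 1 / real N"
    using eventually_ge_at_top[of M] by eventually_elim (rule sum_inverse_squares_bounds(2)[OF assms])
  ultimately show "(\<Sum>\<^sub>\<infinity>m\<in>{M..}. 1 / (real m)^2) \<le> 1 / (real M)^2 + 1 / real M"
    using tendsto_le[OF trivial_limit_sequentially _ partial_sums] by simp
qed

lemma summable_on_B2t_over_squares: "(\<lambda>m::nat. B2t (f m) / (real m)^2) summable_on A"
proof (rule summable_on_iff_abs_summable_on_real[THEN iffD2, OF Infinite_Sum.abs_summable_on_comparison_test])
  show "(\<lambda>m::nat. norm (1 / (real m)^2)) summable_on A"
    using summable_on_inverse_squares by simp
  show "norm (B2t (f m) / (real m)^2) \<le> norm (1 / (real m)^2)" for m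
    using abs_B2t_le[of "f m"] by (simp add: abs_div divide_right_mono)
qed

lemma abs_infsum_B2t_over_squares_le:
  "\<bar>\<Sum>\<^sub>\<infinity>m\<in>A. B2t (f m) / (real m)^2\<bar> \<le> 1/6 * (\<Sum>\<^sub>\<infinity>m\<in>A. 1 / (real m)^2)"
proof -
  have "\<bar>\<Sum>\<^sub>\<infinity>m\<in>A. B2t (f m) / (real m)^2\<bar> \<le> (\<Sum>\<^sub>\<infinity>m\<in>A. \<bar>B2t (f m) / (real m)^2\<bar>)"
    using norm_infsum_bound[OF summable_on_iff_abs_summable_on_real[THEN iffD1, OF summable_on_B2t_over_squares]]
    by simp
  also have "\<dots> \<le> (\<Sum>\<^sub>\<infinity>m\<in>A. 1/6 * (1 / (real m)^2))"
  proof (rule infsum_mono)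
    show "(\<lambda>m. \<bar>B2t (f m) / (real m)^2\<bar>) summable_on A"
      using summable_on_iff_abs_summable_on_real[THEN iffD1, OF summable_on_B2t_over_squares] by simp
    show "(\<lambda>m. 1/6 * (1 / (real m)^2)) summable_on A"
      by (intro summable_on_cmult_right summable_on_inverse_squares)
    show "\<bar>B2t (f m) / (real m)^2\<bar> \<le> 1/6 * (1 / (real m)^2)" for m
      using divide_right_mono[OF abs_B2t_le[of "f m"], of "(real m)^2"] by (simp add: abs_div)
  qed
  also have "\<dots> = 1/6 * (\<Sum>\<^sub>\<infinity>m\<in>A. 1 / (real m)^2)"
    by (rule infsum_cmult_right')
  finally show ?thesis .
qed

section \<open>The series expansion of K2\<close>

lemma K_eq_B1t: "x * z \<noteq> 0 \<Longrightarrow> K x z = - B1t (1 / (x * z))"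
  by (simp add: K_def B1t_def)

lemma K_commute: "K x z = K z x"
  by (simp add: K_def mult.commute)

lemma K2_commute: "K2 x y = K2 y x"
  unfolding K2_def by (simp add: K_commute mult.commute)

lemma abs_K_le: "\<bar>K x y\<bar> \<le> 1/2"
  using abs_B1t_le[of "1 / (x * y)"] by (simp add: K_def B1t_def abs_minus_commute)

lemma integrable_K_mult_K: "(\<lambda>z. K x z * K z y) integrable_on {a..b}"
proof (rule bounded_measurable_integrable_on)
  show "(\<lambda>z. K x z * K z y) \<in> borel_measurable borel"
    unfolding K_def frac_def by measurable
  show "\<bar>K x z * K z y\<bar> \<le> 1/2 * (1/2)" for z
    unfolding abs_mult by (intro mult_mono abs_K_le) auto
qed

lemma integrable_B2t_inverse: "(\<lambda>z. B2t (1 / (x * z))) integrable_on {a..b}"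
proof (rule bounded_measurable_integrable_on)
  show "(\<lambda>z. B2t (1 / (x * z))) \<in> borel_measurable borel"
    unfolding B2t_def frac_def by measurable
qed (rule abs_B2t_le)

lemma integrable_B2t_B1t: "(\<lambda>z. z * B2t (1 / (x * z)) * B1t (1 / (z * y))) integrable_on {0..1}"
proof (rule bounded_measurable_integrable_on)
  show "(\<lambda>z. z * B2t (1 / (x * z)) * B1t (1 / (z * y))) \<in> borel_measurable borel"
    unfolding B2t_def B1t_def frac_def by measurable
  show "\<bar>z * B2t (1 / (x * z)) * B1t (1 / (z * y))\<bar> \<le> 1 * (1/6) * (1/2)" if "z \<in> {0..1}" for z
    using that unfolding abs_mult by (intro mult_mono abs_B2t_le abs_B1t_le) auto
qed

(* Between its jumps at z = 1/(ny), z^2 * B1t (1/(zy)) has derivative 2z * B1t (1/(zy)) - 1/y;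
   the remainder is x/2 * B2t (1/(xz)) times this derivative. *)
definition K2_remainder :: "real \<Rightarrow> real \<Rightarrow> real \<Rightarrow> real" where
  "K2_remainder x y z = x/2 * B2t (1 / (x * z)) * (2 * z * B1t (1 / (z * y)) - 1/y)"

lemma K2_remainder_eq:
  "K2_remainder x y z = x * (z * B2t (1 / (x * z)) * B1t (1 / (z * y))) - x / (2 * y) * B2t (1 / (x * z))"
  by (simp add: K2_remainder_def algebra_simps)

lemma integrable_K2_remainder: "K2_remainder x y integrable_on {0..1}"
  unfolding K2_remainder_eq[abs_def]
  by (intro integrable_diff integrable_on_mult_right integrable_B2t_B1t integrable_B2t_inverse)

(* Where floor (1/(zy)) = m, this equals - x/2 * z^2 * B2t (1/(xz)) * B1t (1/(zy)). *)
definition K2_primitive :: "real \<Rightarrow> real \<Rightarrow> real \<Rightarrow> real \<Rightarrow> real" where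
  "K2_primitive x y m z = x/2 * B2t (1 / (x * z)) * ((m + 1/2) * z^2 - z/y)"

lemma K_K_sub_remainder_has_integral_primitive:
  assumes "0 < x" "0 < y" "0 < a" "a \<le> b"
    and floor_eq: "\<And>z. z \<in> {a<..<b} \<Longrightarrow> \<lfloor>1 / (z * y)\<rfloor> = m"
  shows "((\<lambda>z. K x z * K z y - K2_remainder x y z) has_integral
           K2_primitive x y m b - K2_primitive x y m a) {a..b}"
proof (rule fundamental_theorem_of_calculus_interior_strong)
  show "finite {z \<in> {a..b}. 1 / (x * z) \<in> \<int>}"
    using assms by (intro finite_inverse_mult_in_Ints)
  show "continuous_on {a..b} (K2_primitive x y m)"
    unfolding K2_primitive_def using assms by (auto intro!: continuous_intros)
  fix z assume z: "z \<in> {a<..<b} - {z \<in> {a..b}. 1 / (x * z) \<in> \<int>}"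
  then have "0 < z" "1 / (x * z) \<notin> \<int>"
    using assms by auto
  have B1t_zy: "B1t (1 / (z * y)) = 1 / (z * y) - m - 1/2"
    using floor_eq z by (simp add: B1t_def frac_def)
  have B2t_deriv: "((\<lambda>z. B2t (1 / (x * z))) has_real_derivative - (2 * B1t (1 / (x * z))) / (x * z^2)) (at z)"
    using \<open>0 < x\<close> \<open>0 < z\<close> \<open>1 / (x * z) \<notin> \<int>\<close>
    by (intro has_real_derivative_comp_inverse_mult B2t_has_real_derivative) auto
  have "(K2_primitive x y m has_real_derivative
      x/2 * (- (2 * B1t (1 / (x * z))) / (x * z^2) * ((m + 1/2) * z^2 - z/y)
             + B2t (1 / (x * z)) * ((m + 1/2) * (2 * z) - 1/y))) (at z)"
    unfolding K2_primitive_def[abs_def] using \<open>0 < y\<close> \<open>0 < z\<close>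
    by (auto intro!: derivative_eq_intros B2t_deriv) (simp add: field_simps)
  also have "x/2 * (- (2 * B1t (1 / (x * z))) / (x * z^2) * ((m + 1/2) * z^2 - z/y)
             + B2t (1 / (x * z)) * ((m + 1/2) * (2 * z) - 1/y))
      = K x z * K z y - K2_remainder x y z"
    using \<open>0 < x\<close> \<open>0 < y\<close> \<open>0 < z\<close>
    by (simp add: K_eq_B1t K2_remainder_def B1t_zy) (simp add: field_simps power2_eq_square)
  finally show "(K2_primitive x y m has_vector_derivative K x z * K z y - K2_remainder x y z) (at z)"
    by (simp add: has_real_derivative_iff_has_vector_derivative)
qed fact

lemma K2_primitive_at_inverse:
  assumes "0 < y" "0 < n"
  shows "K2_primitive x y m (1 / (n * y)) = x / (2 * y^2) * (m + 1/2 - n) * (B2t (n * y / x) / n^2)"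
  using assms by (simp add: K2_primitive_def field_simps power2_eq_square)

lemma K_K_sub_remainder_has_integral_first_piece:
  fixes M :: nat
  assumes "0 < x" "0 < y" "real M - 1 \<le> 1/y" "1/y < real M"
  shows "((\<lambda>z. K x z * K z y - K2_remainder x y z) has_integral
           - x/2 * B2t (1/x) * B1t (1/y) + x / (4 * y^2) * (B2t (real M * y / x) / (real M)^2))
         {1 / (real M * y)..1}"
proof -
  have "0 < 1/y"
    using assms(2) by simp
  with assms(4) have "0 < real M"
    by linarith
  have floor_eq: "\<lfloor>1 / (z * y)\<rfloor> = int M - 1" if "z \<in> {1 / (real M * y)<..<1}" for z
  proof -
    have "0 < 1 / (real M * y)"
      using \<open>0 < y\<close> \<open>0 < real M\<close> by simp
    with that have "0 < z"
      by (meson greaterThanLessThan_iff order.strict_trans)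
    then have "1/y \<le> 1 / (z * y)" "1 / (z * y) < real M"
      using that \<open>0 < y\<close> \<open>0 < real M\<close> by (auto simp: field_simps)
    then show ?thesis
      using assms(3) by (simp add: floor_eq_iff)
  qed
  have "\<lfloor>1/y\<rfloor> = int M - 1"
    using assms(3,4) by (simp add: floor_eq_iff)
  then have B1t_y: "B1t (1/y) = 1/y - real M + 1/2"
    by (simp add: B1t_def frac_def)
  have "K2_primitive x y (real M - 1) 1 = - x/2 * B2t (1/x) * B1t (1/y)"
    unfolding B1t_y K2_primitive_def by (simp add: algebra_simps)
  moreover have "K2_primitive x y (real M - 1) (1 / (real M * y))
      = - x / (4 * y^2) * (B2t (real M * y / x) / (real M)^2)"
    using K2_primitive_at_inverse[OF \<open>0 < y\<close> \<open>0 < real M\<close>] by simp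
  moreover have "((\<lambda>z. K x z * K z y - K2_remainder x y z) has_integral
      K2_primitive x y (of_int (int M - 1)) 1 - K2_primitive x y (of_int (int M - 1)) (1 / (real M * y)))
      {1 / (real M * y)..1}"
    using assms(1,2,4) \<open>0 < real M\<close> floor_eq
    by (intro K_K_sub_remainder_has_integral_primitive) (auto simp: field_simps)
  ultimately show ?thesis
    by simp
qed

lemma K_K_sub_remainder_has_integral_piece:
  fixes n :: nat
  assumes "0 < x" "0 < y" "0 < n"
  shows "((\<lambda>z. K x z * K z y - K2_remainder x y z) has_integral
           x / (4 * y^2) * (B2t (real n * y / x) / (real n)^2 + B2t (real (Suc n) * y / x) / (real (Suc n))^2))
         {1 / (real (Suc n) * y)..1 / (real n * y)}"
proof -
  have floor_eq: "\<lfloor>1 / (z * y)\<rfloor> = int n" if "z \<in> {1 / (real (Suc n) * y)<..<1 / (real n * y)}" for z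
  proof -
    have "0 < 1 / (real (Suc n) * y)"
      using \<open>0 < y\<close> by simp
    with that have "0 < z"
      by (meson greaterThanLessThan_iff order.strict_trans)
    moreover have "0 < (real n + 1) * y"
      using \<open>0 < y\<close> by simp
    ultimately have "real n < 1 / (z * y)" "1 / (z * y) < real n + 1"
      using that \<open>0 < y\<close> \<open>0 < n\<close> by (auto simp: field_simps)
    then show ?thesis
      by (simp add: floor_eq_iff)
  qed
  have "((\<lambda>z. K x z * K z y - K2_remainder x y z) has_integral
      K2_primitive x y (of_int (int n)) (1 / (real n * y))
      - K2_primitive x y (of_int (int n)) (1 / (real (Suc n) * y)))
      {1 / (real (Suc n) * y)..1 / (real n * y)}"
  proof (rule K_K_sub_remainder_has_integral_primitive[OF assms(1,2) _ _ floor_eq])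
    show "0 < 1 / (real (Suc n) * y)" "1 / (real (Suc n) * y) \<le> 1 / (real n * y)"
      using \<open>0 < y\<close> \<open>0 < n\<close> by (auto intro!: divide_left_mono mult_right_mono)
  qed
  then show ?thesis
    using K2_primitive_at_inverse[OF \<open>0 < y\<close>, of "real n"] K2_primitive_at_inverse[OF \<open>0 < y\<close>, of "real (Suc n)"]
      \<open>0 < n\<close> by (simp add: algebra_simps)
qed

lemma K_K_sub_remainder_has_integral_partial:
  fixes M N :: nat
  assumes "0 < x" "0 < y" "real M - 1 \<le> 1/y" "1/y < real M" "M \<le> N"
  shows "((\<lambda>z. K x z * K z y - K2_remainder x y z) has_integral
           - x/2 * B2t (1/x) * B1t (1/y) + x / (2 * y^2) *
             ((\<Sum>m=M..N. B2t (real m * y / x) / (real m)^2) - B2t (real N * y / x) / (real N)^2 / 2))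
         {1 / (real N * y)..1}"
  using \<open>M \<le> N\<close>
proof (induction N rule: dec_induct)
  case base
  then show ?case
    using K_K_sub_remainder_has_integral_first_piece[OF assms(1-4)] by (simp add: algebra_simps)
next
  case (step n)
  have "1 < real M * y"
    using assms(2,4) by (simp add: field_simps)
  moreover have "real M * y \<le> real n * y"
    using step.hyps \<open>0 < y\<close> by simp
  ultimately have "1 < real n * y"
    by linarith
  then have "0 < n" "1 / (real n * y) \<le> 1"
    by (auto intro!: gr0I)
  then have "((\<lambda>z. K x z * K z y - K2_remainder x y z) has_integral
      x / (4 * y^2) * (B2t (real n * y / x) / (real n)^2 + B2t (real (Suc n) * y / x) / (real (Suc n))^2)
      + (- x/2 * B2t (1/x) * B1t (1/y) + x / (2 * y^2) *
        ((\<Sum>m=M..n. B2t (real m * y / x) / (real m)^2) - B2t (real n * y / x) / (real n)^2 / 2)))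
      {1 / (real (Suc n) * y)..1}"
    using \<open>0 < y\<close> K_K_sub_remainder_has_integral_piece[OF assms(1,2)]
    by (intro has_integral_combine[OF _ _ _ step.IH]) (auto intro!: divide_left_mono mult_right_mono)
  then show ?case
    using step.hyps by (simp add: algebra_simps)
qed

lemma K2_eq_series:
  assumes "0 < x" "0 < y" "real M - 1 \<le> 1/y" "1/y < real M"
  shows "K2 x y = - x/2 * B2t (1/x) * B1t (1/y)
           + x / (2 * y^2) * (\<Sum>\<^sub>\<infinity>m\<in>{M..}. B2t (real m * y / x) / (real m)^2)
           + integral {0..1} (K2_remainder x y)"
proof -
  define f where "f z = K x z * K z y - K2_remainder x y z" for z
  define c where "c m = B2t (real m * y / x) / (real m)^2" for m
  define C where "C = - x/2 * B2t (1/x) * B1t (1/y)"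
  have f_integrable: "f integrable_on {0..1}"
    unfolding f_def[abs_def] by (intro integrable_diff integrable_K_mult_K integrable_K2_remainder)
  have lim_integral: "(\<lambda>N. integral {1 / (real N * y)..1} f) \<longlonglongrightarrow> integral {0..1} f"
    using filterlim_compose[OF tendsto_integral_at_right[OF f_integrable zero_less_one]
        filterlim_inverse_mult_at_right_0[OF \<open>0 < y\<close>]] .
  have partial: "\<forall>\<^sub>F N in sequentially.
      integral {1 / (real N * y)..1} f = C + x / (2 * y^2) * ((\<Sum>m=M..N. c m) - c N / 2)"
    using eventually_ge_at_top[of M]
  proof eventually_elim
    case (elim N)
    show ?case
      unfolding f_def C_def c_def
      by (rule integral_unique[OF K_K_sub_remainder_has_integral_partial[OF assms elim]])
  qed
  have "c \<longlonglongrightarrow> 0"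
    using summable_LIMSEQ_zero[OF summable_on_imp_summable[OF summable_on_B2t_over_squares]]
    unfolding c_def .
  then have lim_partial: "(\<lambda>N. C + x / (2 * y^2) * ((\<Sum>m=M..N. c m) - c N / 2))
      \<longlonglongrightarrow> C + x / (2 * y^2) * (infsum c {M..} - 0 / 2)"
    unfolding c_def
    by (intro tendsto_intros tendsto_sum_atLeastAtMost_infsum summable_on_B2t_over_squares) simp_all
  have "integral {0..1} f = C + x / (2 * y^2) * infsum c {M..}"
    using LIMSEQ_unique[OF Lim_transform_eventually[OF lim_integral partial] lim_partial] by simp
  moreover have "integral {0..1} f = K2 x y - integral {0..1} (K2_remainder x y)"
    unfolding f_def[abs_def] K2_def by (intro integral_diff integrable_K_mult_K integrable_K2_remainder)
  ultimately show ?thesis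
    unfolding C_def c_def by simp
qed

lemma B2t_inverse_has_integral_B3t:
  assumes "0 < x" "0 < e" "e \<le> 1"
  shows "((\<lambda>z. B2t (1 / (x * z)) - 2*x/3 * z * B3t (1 / (x * z))) has_integral
           x/3 * (e^2 * B3t (1 / (x * e)) - B3t (1/x))) {e..1}"
proof -
  define P where "P z = - x/3 * z^2 * B3t (1 / (x * z))" for z
  have "((\<lambda>z. B2t (1 / (x * z)) - 2*x/3 * z * B3t (1 / (x * z))) has_integral P 1 - P e) {e..1}"
  proof (rule fundamental_theorem_of_calculus_interior_strong)
    show "finite {z \<in> {e..1}. 1 / (x * z) \<in> \<int>}"
      using assms by (intro finite_inverse_mult_in_Ints)
    show "continuous_on {e..1} P"
      unfolding P_def using assms by (auto intro!: continuous_intros)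
    fix z assume z: "z \<in> {e<..<1} - {z \<in> {e..1}. 1 / (x * z) \<in> \<int>}"
    then have "0 < z"
      using assms by auto
    have "((\<lambda>z. B3t (1 / (x * z))) has_real_derivative - (3 * B2t (1 / (x * z))) / (x * z^2)) (at z)"
      using z \<open>0 < x\<close> \<open>0 < z\<close>
      by (intro has_real_derivative_comp_inverse_mult B3t_has_real_derivative) auto
    then have "(P has_real_derivative B2t (1 / (x * z)) - 2*x/3 * z * B3t (1 / (x * z))) (at z)"
      unfolding P_def[abs_def] using \<open>0 < x\<close> \<open>0 < z\<close>
      by (auto intro!: derivative_eq_intros) (simp add: field_simps power2_eq_square)
    then show "(P has_vector_derivative B2t (1 / (x * z)) - 2*x/3 * z * B3t (1 / (x * z))) (at z)"
      by (simp add: has_real_derivative_iff_has_vector_derivative)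
  qed (use assms in simp)
  then show ?thesis
    by (simp add: P_def algebra_simps)
qed

lemma abs_integral_B2t_inverse_Icc_le:
  assumes "0 < x" "0 < e" "e \<le> 1"
  shows "\<bar>integral {e..1} (\<lambda>z. B2t (1 / (x * z)))\<bar> \<le> x / (18 * sqrt 3)"
proof -
  define h where "h z = 2*x/3 * z * B3t (1 / (x * z))" for z
  have h_continuous: "continuous_on {e..1} h"
    unfolding h_def using assms by (auto intro!: continuous_intros)
  have "integral {e..1} (\<lambda>z. B2t (1 / (x * z)) - h z) = x/3 * (e^2 * B3t (1 / (x * e)) - B3t (1/x))"
    unfolding h_def using B2t_inverse_has_integral_B3t[OF assms] by (rule integral_unique)
  then have split: "integral {e..1} (\<lambda>z. B2t (1 / (x * z)))
      = x/3 * (e^2 * B3t (1 / (x * e)) - B3t (1/x)) + integral {e..1} h"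
    using integral_diff[OF integrable_B2t_inverse integrable_continuous_real[OF h_continuous]] by simp
  have "\<bar>e^2 * B3t (1 / (x * e)) - B3t (1/x)\<bar> \<le> e^2 * (sqrt 3 / 36) + sqrt 3 / 36"
    using abs_triangle_ineq4[of "e^2 * B3t (1 / (x * e))" "B3t (1/x)"] abs_B3t_le[of "1/x"]
      mult_left_mono[OF abs_B3t_le[of "1 / (x * e)"], of "e^2"]
    by (simp add: abs_mult)
  then have "\<bar>x/3 * (e^2 * B3t (1 / (x * e)) - B3t (1/x))\<bar> \<le> x/3 * (e^2 * (sqrt 3 / 36) + sqrt 3 / 36)"
    using assms by (simp add: abs_mult)
  moreover have "\<bar>integral {e..1} h\<bar> \<le> integral {e..1} (\<lambda>z. 2*x/3 * (sqrt 3 / 36) * z)"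
  proof (rule integral_norm_bound_integral[where f=h, simplified])
    show "h integrable_on {e..1}" "(\<lambda>z. 2*x/3 * (sqrt 3 / 36) * z) integrable_on {e..1}"
      by (intro integrable_continuous_real h_continuous continuous_intros)+
    show "\<bar>h z\<bar> \<le> 2*x/3 * (sqrt 3 / 36) * z" if "z \<in> {e..1}" for z
      using that assms abs_B3t_le[of "1 / (x * z)"] unfolding h_def abs_mult
      by (simp add: mult.commute mult_left_mono)
  qed
  moreover have "integral {e..1} (\<lambda>z. 2*x/3 * (sqrt 3 / 36) * z) = 2*x/3 * (sqrt 3 / 36) * ((1 - e^2) / 2)"
    using assms by simp
  ultimately have "\<bar>integral {e..1} (\<lambda>z. B2t (1 / (x * z)))\<bar>
      \<le> x/3 * (e^2 * (sqrt 3 / 36) + sqrt 3 / 36) + 2*x/3 * (sqrt 3 / 36) * ((1 - e^2) / 2)"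
    unfolding split by linarith
  also have "\<dots> = x * (sqrt 3 / 54)"
    by (simp add: field_simps)
  also have "sqrt 3 / 54 = 1 / (18 * sqrt (3::real))"
    by (simp add: field_simps)
  finally show ?thesis
    by simp
qed

lemma abs_integral_B2t_inverse_le:
  assumes "0 < x"
  shows "\<bar>integral {0..1} (\<lambda>z. B2t (1 / (x * z)))\<bar> \<le> x / (18 * sqrt 3)"
proof (rule tendsto_upperbound)
  show "((\<lambda>e. \<bar>integral {e..1} (\<lambda>z. B2t (1 / (x * z)))\<bar>)
      \<longlongrightarrow> \<bar>integral {0..1} (\<lambda>z. B2t (1 / (x * z)))\<bar>) (at_right 0)"
    by (intro tendsto_rabs tendsto_integral_at_right integrable_B2t_inverse) simp
  have "\<forall>\<^sub>F e in at_right 0. 0 < e \<and> e < (1::real)"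
    by (simp add: eventually_at_right_field) (use zero_less_one in blast)
  then show "\<forall>\<^sub>F e in at_right 0. \<bar>integral {e..1} (\<lambda>z. B2t (1 / (x * z)))\<bar> \<le> x / (18 * sqrt 3)"
    by eventually_elim (use assms in \<open>simp add: abs_integral_B2t_inverse_Icc_le\<close>)
qed simp

lemma abs_integral_K2_remainder_le:
  assumes "0 < x" "0 < y"
  shows "\<bar>integral {0..1} (K2_remainder x y)\<bar> \<le> x/24 + x^2 / (36 * sqrt 3 * y)"
proof -
  have "\<bar>integral {0..1} (\<lambda>z. z * B2t (1 / (x * z)) * B1t (1 / (z * y)))\<bar> \<le> integral {0..1} (\<lambda>z::real. z / 12)"
  proof (rule integral_norm_bound_integral[where f="\<lambda>z. z * B2t (1 / (x * z)) * B1t (1 / (z * y))", simplified])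
    show "(\<lambda>z::real. z / 12) integrable_on {0..1}"
      by (intro integrable_continuous_real continuous_intros) simp
    show "\<bar>z * B2t (1 / (x * z)) * B1t (1 / (z * y))\<bar> \<le> z / 12" if "z \<in> {0..1}" for z
    proof -
      have "\<bar>B2t (1 / (x * z))\<bar> * \<bar>B1t (1 / (z * y))\<bar> \<le> 1/6 * (1/2)"
        by (intro mult_mono abs_B2t_le abs_B1t_le) auto
      then have "z * (\<bar>B2t (1 / (x * z))\<bar> * \<bar>B1t (1 / (z * y))\<bar>) \<le> z * (1/6 * (1/2))"
        using that by (intro mult_left_mono) auto
      then show ?thesis
        using that by (simp add: abs_mult mult.assoc)
    qed
  qed (rule integrable_B2t_B1t)
  also have "integral {0..1} (\<lambda>z. z / 12) = (1/24 :: real)"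
    using integral_unique[OF has_integral_divide[OF ident_has_integral[of 0 1], of 12]] by simp
  finally have first: "\<bar>x * integral {0..1} (\<lambda>z. z * B2t (1 / (x * z)) * B1t (1 / (z * y)))\<bar> \<le> x/24"
    using assms by (simp add: abs_mult)
  have "\<bar>x / (2 * y) * integral {0..1} (\<lambda>z. B2t (1 / (x * z)))\<bar> \<le> x / (2 * y) * (x / (18 * sqrt 3))"
    using assms mult_left_mono[OF abs_integral_B2t_inverse_le[OF assms(1)], of "x / (2 * y)"]
    by (simp add: abs_mult)
  also have "\<dots> = x^2 / (36 * sqrt 3 * y)"
    by (simp add: field_simps power2_eq_square)
  finally have second: "\<bar>x / (2 * y) * integral {0..1} (\<lambda>z. B2t (1 / (x * z)))\<bar> \<le> x^2 / (36 * sqrt 3 * y)" .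
  have "integral {0..1} (K2_remainder x y)
      = x * integral {0..1} (\<lambda>z. z * B2t (1 / (x * z)) * B1t (1 / (z * y)))
        - x / (2 * y) * integral {0..1} (\<lambda>z. B2t (1 / (x * z)))"
    unfolding K2_remainder_eq[abs_def] integral_mult_right[symmetric]
    by (intro integral_diff integrable_on_mult_right integrable_B2t_B1t integrable_B2t_inverse)
  then show ?thesis
    using first second by linarith
qed

lemma K2_decomposition:
  assumes "0 < x" "0 < y"
  obtains C R where
    "K2 x y = C + x / (2 * y^2) * infsum (\<lambda>m::nat. B2t (real m * y / x) / (real m)^2) {m. real m > 1 / y} + R"
    "\<bar>C\<bar> \<le> x/24" "\<bar>R\<bar> \<le> x/24 + x^2 / (36 * sqrt 3 * y)"
proof -
  obtain M :: nat where M: "real M - 1 \<le> 1/y" "1/y < real M" "{m. 1/y < real m} = {M..}"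
    using obtain_least_nat_greater[of "1/y"] assms(2) by auto
  show thesis
  proof (rule that)
    show "K2 x y = - x/2 * B2t (1/x) * B1t (1/y)
        + x / (2 * y^2) * infsum (\<lambda>m::nat. B2t (real m * y / x) / (real m)^2) {m. real m > 1 / y}
        + integral {0..1} (K2_remainder x y)"
      using K2_eq_series[OF assms M(1,2)] M(3) by simp
    have "\<bar>B2t (1/x) * B1t (1/y)\<bar> \<le> 1/6 * (1/2)"
      unfolding abs_mult by (intro mult_mono abs_B2t_le abs_B1t_le) auto
    then show "\<bar>- x/2 * B2t (1/x) * B1t (1/y)\<bar> \<le> x/24"
      using assms(1) mult_left_mono[of _ _ "x/2"] by (simp add: abs_mult mult.assoc)
  qed (rule abs_integral_K2_remainder_le[OF assms])
qed

lemma abs_K2_series_le: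
  assumes "0 < y"
  shows "\<bar>infsum (\<lambda>m::nat. B2t (f m) / (real m)^2) {m. real m > 1 / y}\<bar> \<le> (y^2 + y) / 6"
proof -
  obtain M :: nat where M: "1/y < real M" "{m. 1/y < real m} = {M..}"
    using obtain_least_nat_greater[of "1/y"] assms by auto
  have "0 < 1/y"
    using assms by simp
  with M(1) have "0 < real M"
    by linarith
  then have "1 / real M < y"
    using M(1) assms by (simp add: field_simps)
  have "\<bar>infsum (\<lambda>m::nat. B2t (f m) / (real m)^2) {M..}\<bar> \<le> 1/6 * (\<Sum>\<^sub>\<infinity>m\<in>{M..}. 1 / (real m)^2)"
    by (rule abs_infsum_B2t_over_squares_le)
  also have "\<dots> \<le> 1/6 * ((1 / real M)^2 + 1 / real M)"
    using infsum_inverse_squares_tail_bounds(2)[of M] \<open>0 < real M\<close> by (simp add: power_divide)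
  also have "\<dots> \<le> 1/6 * (y^2 + y)"
    using \<open>1 / real M < y\<close> \<open>0 < real M\<close> by (intro mult_left_mono add_mono power_mono) auto
  finally show ?thesis
    unfolding M(2) by simp
qed

lemma K2_series_diagonal_bounds:
  assumes "0 < x"
  shows "x / (6 * (1 + x)) \<le> infsum (\<lambda>m::nat. B2t (real m * x / x) / (real m)^2) {m. real m > 1 / x}"
    and "infsum (\<lambda>m::nat. B2t (real m * x / x) / (real m)^2) {m. real m > 1 / x} \<le> (x^2 + x) / 6"
proof -
  obtain M :: nat where M: "real M - 1 \<le> 1/x" "1/x < real M" "{m. 1/x < real m} = {M..}"
    using obtain_least_nat_greater[of "1/x"] assms by auto
  have "0 < 1/x"
    using assms by simp
  with M(2) have "0 < real M"
    by linarith
  have "1 / real M < x"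
    using M(2) assms \<open>0 < real M\<close> by (simp add: field_simps)
  have "x / (1 + x) \<le> 1 / real M"
    using M(1) assms \<open>0 < real M\<close> by (simp add: field_simps)
  have terms: "(\<lambda>m::nat. B2t (real m * x / x) / (real m)^2) = (\<lambda>m. 1/6 * (1 / (real m)^2))"
    using assms by simp
  have S: "infsum (\<lambda>m::nat. B2t (real m * x / x) / (real m)^2) {m. real m > 1 / x}
      = 1/6 * (\<Sum>\<^sub>\<infinity>m\<in>{M..}. 1 / (real m)^2)"
    unfolding M(3) terms by (rule infsum_cmult_right')
  have "x / (6 * (1 + x)) = 1/6 * (x / (1 + x))"
    by simp
  also have "\<dots> \<le> 1/6 * (1 / real M)"
    using \<open>x / (1 + x) \<le> 1 / real M\<close> by (rule mult_left_mono) simp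
  also have "\<dots> \<le> 1/6 * (\<Sum>\<^sub>\<infinity>m\<in>{M..}. 1 / (real m)^2)"
    using infsum_inverse_squares_tail_bounds(1)[of M] \<open>0 < real M\<close> by simp
  finally show "x / (6 * (1 + x)) \<le> infsum (\<lambda>m::nat. B2t (real m * x / x) / (real m)^2) {m. real m > 1 / x}"
    unfolding S .
  have "1/6 * (\<Sum>\<^sub>\<infinity>m\<in>{M..}. 1 / (real m)^2) \<le> 1/6 * ((1 / real M)^2 + 1 / real M)"
    using infsum_inverse_squares_tail_bounds(2)[of M] \<open>0 < real M\<close> by (simp add: power_divide)
  also have "\<dots> \<le> 1/6 * (x^2 + x)"
    using \<open>1 / real M < x\<close> \<open>0 < real M\<close> by (intro mult_left_mono add_mono power_mono) auto
  finally show "infsum (\<lambda>m::nat. B2t (real m * x / x) / (real m)^2) {m. real m > 1 / x} \<le> (x^2 + x) / 6"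
    unfolding S by simp
qed

lemma abs_K2_div_le:
  assumes "0 < x" "0 < y"
  shows "\<bar>K2 x y\<bar> / x \<le> 1/12 + x / ((36 * sqrt 3) * y)
           + 1 / (2 * y^2) * \<bar>infsum (\<lambda>m::nat. B2t (real m * y / x) / (real m)^2) {m. real m > 1 / y}\<bar>"
proof -
  define S where "S = infsum (\<lambda>m::nat. B2t (real m * y / x) / (real m)^2) {m. real m > 1 / y}"
  obtain C R where K2: "K2 x y = C + x / (2 * y^2) * S + R"
    and "\<bar>C\<bar> \<le> x/24" "\<bar>R\<bar> \<le> x/24 + x^2 / (36 * sqrt 3 * y)"
    using K2_decomposition[OF assms] unfolding S_def by blast
  moreover have "\<bar>x / (2 * y^2) * S\<bar> = x * (1 / (2 * y^2) * \<bar>S\<bar>)"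
    using assms by (simp add: abs_mult)
  ultimately have "\<bar>K2 x y\<bar> \<le> x/24 + x * (1 / (2 * y^2) * \<bar>S\<bar>) + (x/24 + x^2 / (36 * sqrt 3 * y))"
    by linarith
  also have "\<dots> = x * (1/12 + x / ((36 * sqrt 3) * y) + 1 / (2 * y^2) * \<bar>S\<bar>)"
    by (simp add: algebra_simps power2_eq_square)
  finally show ?thesis
    unfolding S_def using assms by (simp add: pos_divide_le_eq mult.commute)
qed

lemma abs_K2_le_ratio:
  assumes "0 < x" "x \<le> y" "y \<le> 1"
  shows "\<bar>K2 x y\<bar> \<le> (1/4 + 1 / (36 * sqrt 3)) * (x / y)"
proof -
  have "0 < y"
    using assms by linarith
  define S where "S = infsum (\<lambda>m::nat. B2t (real m * y / x) / (real m)^2) {m. real m > 1 / y}"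
  obtain C R where K2: "K2 x y = C + x / (2 * y^2) * S + R"
    and "\<bar>C\<bar> \<le> x/24" "\<bar>R\<bar> \<le> x/24 + x^2 / (36 * sqrt 3 * y)"
    using K2_decomposition[OF \<open>0 < x\<close> \<open>0 < y\<close>] unfolding S_def by blast
  moreover have "\<bar>x / (2 * y^2) * S\<bar> \<le> x / (2 * y^2) * ((y^2 + y) / 6)"
    using \<open>0 < x\<close> \<open>0 < y\<close> mult_left_mono[OF abs_K2_series_le[OF \<open>0 < y\<close>], of "x / (2 * y^2)"]
    unfolding S_def by (simp add: abs_mult)
  moreover have "x / (2 * y^2) * ((y^2 + y) / 6) = x/12 + x / (12 * y)"
    using \<open>0 < y\<close> by (simp add: field_simps power2_eq_square)
  moreover have "x/6 \<le> x / (6 * y)"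
    using assms \<open>0 < y\<close> by (simp add: field_simps)
  moreover have "x^2 / (36 * sqrt 3 * y) \<le> x / (36 * sqrt 3 * y)"
    using assms \<open>0 < y\<close> by (intro divide_right_mono) (auto simp: power2_eq_square mult_le_cancel_right1)
  moreover have "1/4 * (x / y) = x / (6 * y) + x / (12 * y)" "1 / (36 * sqrt 3) * (x / y) = x / (36 * sqrt 3 * y)"
    by simp_all
  ultimately show ?thesis
    unfolding distrib_right by linarith
qed

lemma abs_K2_le_min_max:
  assumes "0 < x" "x \<le> 1" "0 < y" "y \<le> 1"
  shows "\<bar>K2 x y\<bar> \<le> (1/4 + 1 / (36 * sqrt 3)) * (min x y / max x y)"
proof (cases "x \<le> y")
  case True
  then show ?thesis
    using abs_K2_le_ratio[OF \<open>0 < x\<close> True \<open>y \<le> 1\<close>] by simp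
next
  case False
  then show ?thesis
    using abs_K2_le_ratio[OF \<open>0 < y\<close> _ \<open>x \<le> 1\<close>] K2_commute[of x y] by simp
qed

lemma abs_K2_diagonal_sub_le:
  assumes "0 < x"
  shows "\<bar>K2 x x - 1/12\<bar> \<le> (1/6 + 1 / (36 * sqrt 3)) * x"
proof -
  define S where "S = infsum (\<lambda>m::nat. B2t (real m * x / x) / (real m)^2) {m. real m > 1 / x}"
  obtain C R where K2: "K2 x x = C + x / (2 * x^2) * S + R"
    and "\<bar>C\<bar> \<le> x/24" "\<bar>R\<bar> \<le> x/24 + x^2 / (36 * sqrt 3 * x)"
    using K2_decomposition[OF assms assms] unfolding S_def by blast
  have "x / (6 * (1 + x)) \<le> S" "S \<le> (x^2 + x) / 6"
    unfolding S_def using K2_series_diagonal_bounds[OF assms] by auto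
  then have "x / (6 * (1 + x)) / (2 * x) \<le> S / (2 * x)" "S / (2 * x) \<le> (x^2 + x) / 6 / (2 * x)"
    using assms by (intro divide_right_mono; simp)+
  moreover have "6 * (1 + x) * (2 * x) = x * (12 * (1 + x))"
    by (simp add: algebra_simps)
  then have "x / (6 * (1 + x)) / (2 * x) = 1 / (12 * (1 + x))"
    using assms by (simp add: divide_divide_eq_left)
  moreover have "(x^2 + x) / 6 / (2 * x) = 1/12 + x/12" "x / (2 * x^2) = 1 / (2 * x)"
    using assms by (simp_all add: field_simps power2_eq_square)
  ultimately have "1 / (12 * (1 + x)) \<le> x / (2 * x^2) * S" "x / (2 * x^2) * S \<le> 1/12 + x/12"
    by simp_all
  moreover have "1/12 - x/12 \<le> 1 / (12 * (1 + x))"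
    using assms by (simp add: field_simps)
  ultimately have "\<bar>x / (2 * x^2) * S - 1/12\<bar> \<le> x/12"
    by linarith
  moreover have "x^2 / (36 * sqrt 3 * x) = 1 / (36 * sqrt 3) * x"
    using assms by (simp add: power2_eq_square)
  ultimately show ?thesis
    unfolding K2 distrib_right using \<open>\<bar>C\<bar> \<le> x/24\<close> \<open>\<bar>R\<bar> \<le> x/24 + x^2 / (36 * sqrt 3 * x)\<close> by linarith
qed

theorem lemma2p4:
  fixes x y :: real
  assumes "0 < x" "x \<le> 1" "0 < y" "y \<le> 1"
  shows "\<bar>K2 x y\<bar> / x \<le> 1/12 + x / ((36 * sqrt 3) * y)
           + 1 / (2 * y^2) * \<bar>infsum (\<lambda>m::nat. B2t (real m * y / x) / (real m)^2) {m. real m > 1 / y}\<bar>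
       \<and> \<bar>K2 x y\<bar> \<le> (1/4 + 1 / (36 * sqrt 3)) * (min x y / max x y)
       \<and> \<bar>K2 x x - 1/12\<bar> \<le> (1/6 + 1 / (36 * sqrt 3)) * x"
  using abs_K2_div_le[OF assms(1,3)] abs_K2_le_min_max[OF assms] abs_K2_diagonal_sub_le[OF assms(1)]
  by blast

end
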